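(* Let $\mathbb{X}$ be a reflexive Banach space and $\mathbb{Y}$ any Banach space. Let $T\in\mathbb{L}(\mathbb{X},\mathbb{Y})$ with $\|T\|=1$, suppose $\mathbb{K}(\mathbb{X},\mathbb{Y})$ is an $M$-ideal of $\mathbb{L}(\mathbb{X},\mathbb{Y})$ and $\operatorname{dist}(T,\mathbb{K}(\mathbb{X},\mathbb{Y}))<1$. Suppose $\{x_1,\dots,x_r\}$ is a maximal linearly independent subset of $M_T\cap\operatorname{Ext}(B_{\mathbb{X}})$ and that $Tx_i$ is $m_i$-smooth for $1\le i\le r$. Then $\dim\operatorname{span}J(T)\ge\sum_{i=1}^r m_i$.
   Context: $\mathbb{L}(\mathbb{X},\mathbb{Y})$ (resp. $\mathbb{K}(\mathbb{X},\mathbb{Y})$): bounded (resp. compact) linear operators with operator norm. $M$-ideal: a closed subspace $\mathbb{V}$ of $\mathbb{Z}$ with $\mathbb{Z}^*=\mathbb{V}^*\oplus_1\mathbb{V}^\perp$ (unique decomposition $z^*=z_1^*+z_2^*$, $z_2^*\in\mathbb{V}^\perp$, $\|z^*\|=\|z_1^*\|+\|z_2^*\|$). $B_{\mathbb{X}}$ is the closed unit ball, $\operatorname{Ext}(C)$ the extreme points of a convex set $C$, $M_T=\{x:\|x\|=1,\|Tx\|=\|T\|\}$. For a unit vector $z$ of a Banach space $\mathbb{Z}$, $J(z)=\{f\in\mathbb{Z}^*:\|f\|=1,f(z)=1\}$, and $z$ is $k$-smooth if $\dim\operatorname{span}J(z)=k$ (this applies also to $T$ as a unit vector of $\mathbb{L}(\mathbb{X},\mathbb{Y})$).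 *)

theory Defs
  imports "HOL-Analysis.Analysis"
begin

definition reflexive_space :: "'a::real_normed_vector itself \<Rightarrow> bool" where
  "reflexive_space _ \<longleftrightarrow>
     (\<forall>\<phi> :: ('a \<Rightarrow>\<^sub>L real) \<Rightarrow>\<^sub>L real. \<exists>x::'a. \<forall>f. blinfun_apply \<phi> f = blinfun_apply f x)"

definition compact_ops :: "('a::real_normed_vector \<Rightarrow>\<^sub>L 'b::real_normed_vector) set" where
  "compact_ops = {T. compact (closure (blinfun_apply T ` cball 0 1))}"

definition annihilator :: "'z::real_normed_vector set \<Rightarrow> ('z \<Rightarrow>\<^sub>L real) set" where
  "annihilator V = {f. \<forall>v\<in>V. blinfun_apply f v = 0}"

text \<open>M-ideal: Z* = W (+)_1 V-perp, unique decomposition, with W a subspace (identified with V*).\<close>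
definition M_ideal :: "'z::real_normed_vector set \<Rightarrow> bool" where
  "M_ideal V \<longleftrightarrow> subspace V \<and> closed V \<and>
     (\<exists>W :: ('z \<Rightarrow>\<^sub>L real) set. subspace W \<and>
        (\<forall>f. \<exists>!p. fst p \<in> W \<and> snd p \<in> annihilator V \<and> f = fst p + snd p) \<and>
        (\<forall>w\<in>W. \<forall>g\<in>annihilator V. norm (w + g) = norm w + norm g))"

definition M_set :: "('a::real_normed_vector \<Rightarrow>\<^sub>L 'b::real_normed_vector) \<Rightarrow> 'a set" where
  "M_set T = {x. norm x = 1 \<and> norm (blinfun_apply T x) = norm T}"

definition J_set :: "'z::real_normed_vector \<Rightarrow> ('z \<Rightarrow>\<^sub>L real) set" where
  "J_set z = {f. norm f = 1 \<and> blinfun_apply f z = 1}"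

definition finite_dim_set :: "'a::real_vector set \<Rightarrow> bool" where
  "finite_dim_set S \<longleftrightarrow> (\<exists>B. finite B \<and> span B = span S)"

definition k_smooth :: "'z::real_normed_vector \<Rightarrow> nat \<Rightarrow> bool" where
  "k_smooth z k \<longleftrightarrow> norm z = 1 \<and> finite_dim_set (J_set z) \<and> dim (span (J_set z)) = k"

end

theory Submission
  imports Defs
begin

text \<open>If x is a unit vector with \<parallel>T x\<parallel> = \<parallel>T\<parallel> = 1 and g \<in> J(T x), then the functional
  A \<mapsto> g (A x) lies in J(T). Take a linearly independent set S of such x and, for each x \<in> S,
  m x linearly independent elements g of J(T x). The resulting functionals on L(X, Y) are linearly
  independent: with functionals \<phi> x biorthogonal to S (Hahn-Banach), testing a linear relation
  against the rank-one operators v \<mapsto> \<phi> x0 v \<cdot> y isolates the terms belonging to x0. This lower bound uses only \<parallel>T\<parallel> = 1 and the linear independence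
  of S.\<close>

text \<open>Norm-dominated linear functionals on subspaces, encoded by their graphs; Hahn-Banach follows
  by Zorn's lemma on these graphs.\<close>
definition dominated_linear_graph :: "('a::real_normed_vector \<times> real) set \<Rightarrow> bool" where
  "dominated_linear_graph G \<longleftrightarrow> (0, 0) \<in> G
     \<and> (\<forall>x a b. (x, a) \<in> G \<longrightarrow> (x, b) \<in> G \<longrightarrow> a = b)
     \<and> (\<forall>x a y b. (x, a) \<in> G \<longrightarrow> (y, b) \<in> G \<longrightarrow> (x + y, a + b) \<in> G)
     \<and> (\<forall>x a c. (x, a) \<in> G \<longrightarrow> (c *\<^sub>R x, c * a) \<in> G)
     \<and> (\<forall>x a. (x, a) \<in> G \<longrightarrow> a \<le> norm x)"

lemma dominated_linear_graphD:
  assumes "dominated_linear_graph G"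
  shows "(0, 0) \<in> G"
    and "\<And>x a b. (x, a) \<in> G \<Longrightarrow> (x, b) \<in> G \<Longrightarrow> a = b"
    and "\<And>x a y b. (x, a) \<in> G \<Longrightarrow> (y, b) \<in> G \<Longrightarrow> (x + y, a + b) \<in> G"
    and "\<And>x a c. (x, a) \<in> G \<Longrightarrow> (c *\<^sub>R x, c * a) \<in> G"
    and "\<And>x a. (x, a) \<in> G \<Longrightarrow> a \<le> norm x"
  using assms unfolding dominated_linear_graph_def by blast+

lemma dominated_linear_graphI:
  assumes "(0, 0) \<in> G"
    and "\<And>x a b. (x, a) \<in> G \<Longrightarrow> (x, b) \<in> G \<Longrightarrow> a = b"
    and "\<And>x a y b. (x, a) \<in> G \<Longrightarrow> (y, b) \<in> G \<Longrightarrow> (x + y, a + b) \<in> G"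
    and "\<And>x a c. (x, a) \<in> G \<Longrightarrow> (c *\<^sub>R x, c * a) \<in> G"
    and "\<And>x a. (x, a) \<in> G \<Longrightarrow> a \<le> norm x"
  shows "dominated_linear_graph G"
  using assms unfolding dominated_linear_graph_def by blast

lemma dominated_linear_graph_Union_chain:
  assumes "C \<noteq> {}" "\<And>G. G \<in> C \<Longrightarrow> dominated_linear_graph G" "chain\<^sub>\<subseteq> C"
  shows "dominated_linear_graph (\<Union>C)"
proof -
  have common_member: "\<exists>G\<in>C. p \<in> G \<and> q \<in> G" if pq: "p \<in> \<Union>C" "q \<in> \<Union>C" for p q
  proof -
    obtain G1 G2 where "G1 \<in> C" "G2 \<in> C" "p \<in> G1" "q \<in> G2" using pq by blast
    moreover have "G1 \<subseteq> G2 \<or> G2 \<subseteq> G1"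
      using \<open>chain\<^sub>\<subseteq> C\<close> calculation(1,2) unfolding chain_subset_def by blast
    ultimately show ?thesis by blast
  qed
  note D = dominated_linear_graphD[OF assms(2)]
  show ?thesis
  proof (rule dominated_linear_graphI)
    show "(0, 0) \<in> \<Union>C" using \<open>C \<noteq> {}\<close> D(1) by blast
    show "a = b" if "(x, a) \<in> \<Union>C" "(x, b) \<in> \<Union>C" for x a b
      using common_member[OF that] D(2) by blast
    show "(x + y, a + b) \<in> \<Union>C" if "(x, a) \<in> \<Union>C" "(y, b) \<in> \<Union>C" for x a y b
      using common_member[OF that] D(3) by blast
    show "(c *\<^sub>R x, c * a) \<in> \<Union>C" if "(x, a) \<in> \<Union>C" for x a c
      using that D(4) by blast
    show "a \<le> norm x" if "(x, a) \<in> \<Union>C" for x a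
      using that D(5) by blast
  qed
qed

text \<open>The extension value c must satisfy a - \<parallel>u - z\<parallel> \<le> c \<le> \<parallel>v + z\<parallel> - b on the graph;
  such a c exists because a + b \<le> \<parallel>u + v\<parallel> \<le> \<parallel>u - z\<parallel> + \<parallel>v + z\<parallel>.\<close>
lemma dominated_linear_graph_extension_value:
  assumes "dominated_linear_graph M"
  obtains c where "\<And>u a. (u, a) \<in> M \<Longrightarrow> a - norm (u - z) \<le> c"
    and "\<And>v b. (v, b) \<in> M \<Longrightarrow> c \<le> norm (v + z) - b"
proof -
  note D = dominated_linear_graphD[OF assms]
  define L where "L = {a - norm (u - z) | u a. (u, a) \<in> M}"
  have key: "a - norm (u - z) \<le> norm (v + z) - b" if "(u, a) \<in> M" "(v, b) \<in> M" for u a v b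
  proof -
    have "a + b \<le> norm (u + v)" using D(5)[OF D(3)[OF that]] .
    also have "\<dots> \<le> norm (u - z) + norm (v + z)"
      using norm_triangle_ineq[of "u - z" "v + z"] by simp
    finally show ?thesis by simp
  qed
  have "L \<noteq> {}" using D(1) unfolding L_def by blast
  have "bdd_above L"
    unfolding L_def bdd_above_def using key[OF _ D(1)] by auto
  show thesis
  proof (rule that[of "Sup L"])
    show "a - norm (u - z) \<le> Sup L" if "(u, a) \<in> M" for u a
      by (rule cSup_upper[OF _ \<open>bdd_above L\<close>]) (use that L_def in blast)
    show "Sup L \<le> norm (v + z) - b" if "(v, b) \<in> M" for v b
      by (rule cSup_least[OF \<open>L \<noteq> {}\<close>]) (use key[OF _ that] L_def in blast)
  qed
qed

lemma dominated_linear_graph_extension: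
  assumes M: "dominated_linear_graph M" and z: "\<And>a. (z, a) \<notin> M"
    and c_lower: "\<And>u a. (u, a) \<in> M \<Longrightarrow> a - norm (u - z) \<le> c"
    and c_upper: "\<And>v b. (v, b) \<in> M \<Longrightarrow> c \<le> norm (v + z) - b"
  shows "dominated_linear_graph {(x + t *\<^sub>R z, a + t * c) | x a t. (x, a) \<in> M}"
    (is "dominated_linear_graph ?M'")
proof -
  note D = dominated_linear_graphD[OF M]
  have t_unique: "t = t'" if "(x, a) \<in> M" "(x', a') \<in> M" "x + t *\<^sub>R z = x' + t' *\<^sub>R z"
    for x a x' a' t t'
  proof (rule ccontr)
    assume "t \<noteq> t'"
    have "(x + (-1) *\<^sub>R x', a + (-1) * a') \<in> M" using D(3)[OF that(1) D(4)[OF that(2)]] .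
    from D(4)[OF this, of "1 / (t' - t)"]
    have "((1 / (t' - t)) *\<^sub>R (x - x'), (1 / (t' - t)) * (a - a')) \<in> M" by simp
    moreover have "x - x' = (t' - t) *\<^sub>R z" using that(3) by (simp add: algebra_simps)
    ultimately show False using z \<open>t \<noteq> t'\<close> by auto
  qed
  show ?thesis
  proof (rule dominated_linear_graphI)
    have "(0::'a, 0::real) = (0 + 0 *\<^sub>R z, 0 + 0 * c)" by simp
    then show "(0, 0) \<in> ?M'" using D(1) by blast
  next
    fix w p q assume "(w, p) \<in> ?M'" "(w, q) \<in> ?M'"
    then obtain x a t x' a' t' where h: "(x, a) \<in> M" "(x', a') \<in> M" "w = x + t *\<^sub>R z"
      "p = a + t * c" "w = x' + t' *\<^sub>R z" "q = a' + t' * c" by blast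
    then have "t = t'" using t_unique by metis
    with h D(2) show "p = q" by auto
  next
    fix w p w' q assume "(w, p) \<in> ?M'" "(w', q) \<in> ?M'"
    then obtain x a t x' a' t' where h: "(x, a) \<in> M" "(x', a') \<in> M" "w = x + t *\<^sub>R z"
      "p = a + t * c" "w' = x' + t' *\<^sub>R z" "q = a' + t' * c" by blast
    have "w + w' = (x + x') + (t + t') *\<^sub>R z" "p + q = (a + a') + (t + t') * c"
      using h by (auto simp: algebra_simps)
    then show "(w + w', p + q) \<in> ?M'" using D(3)[OF h(1,2)] by blast
  next
    fix w p r assume "(w, p) \<in> ?M'"
    then obtain x a t where h: "(x, a) \<in> M" "w = x + t *\<^sub>R z" "p = a + t * c" by blast
    have "r *\<^sub>R w = r *\<^sub>R x + (r * t) *\<^sub>R z" "r * p = r * a + (r * t) * c"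
      using h by (auto simp: algebra_simps)
    then show "(r *\<^sub>R w, r * p) \<in> ?M'" using D(4)[OF h(1)] by blast
  next
    fix w p assume "(w, p) \<in> ?M'"
    then obtain x a t where h: "(x, a) \<in> M" "w = x + t *\<^sub>R z" "p = a + t * c" by blast
    show "p \<le> norm w"
    proof (cases t "0::real" rule: linorder_cases)
      case equal
      then show ?thesis using h D(5) by simp
    next
      case greater
      have "c \<le> norm ((1 / t) *\<^sub>R x + z) - (1 / t) * a" using c_upper[OF D(4)[OF h(1)]] .
      also have "(1 / t) *\<^sub>R x + z = (1 / t) *\<^sub>R w" using h greater by (simp add: algebra_simps)
      finally have "t * c \<le> t * ((1 / t) * norm w - (1 / t) * a)"
        using greater by (simp add: mult_left_mono)
      then show ?thesis using h greater by (simp add: algebra_simps)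
    next
      case less
      have "(1 / -t) * a - norm ((1 / -t) *\<^sub>R x - z) \<le> c" using c_lower[OF D(4)[OF h(1)]] .
      also have "(1 / -t) *\<^sub>R x - z = (1 / -t) *\<^sub>R w" using h less by (simp add: algebra_simps)
      finally have "-t * ((1 / -t) * a - (1 / -t) * norm w) \<le> -t * c"
        using less by (simp add: mult_left_mono)
      then show ?thesis using h less by (simp add: algebra_simps)
    qed
  qed
qed

lemma dominated_linear_graph_extend:
  assumes M: "dominated_linear_graph M" and z: "\<And>a. (z, a) \<notin> M"
  obtains M' where "dominated_linear_graph M'" "M \<subset> M'"
proof -
  obtain c where c: "\<And>u a. (u, a) \<in> M \<Longrightarrow> a - norm (u - z) \<le> c"
    "\<And>v b. (v, b) \<in> M \<Longrightarrow> c \<le> norm (v + z) - b"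
    using dominated_linear_graph_extension_value[OF M] by blast
  define M' where "M' = {(x + t *\<^sub>R z, a + t * c) | x a t. (x, a) \<in> M}"
  have "M \<subseteq> M'"
  proof
    fix p assume "p \<in> M"
    moreover have "p = (fst p + 0 *\<^sub>R z, snd p + 0 * c)" by simp
    ultimately show "p \<in> M'" unfolding M'_def by (metis (mono_tags, lifting) CollectI prod.collapse)
  qed
  moreover have "(z, c) \<in> M'"
  proof -
    have "(z, c) = (0 + 1 *\<^sub>R z, 0 + 1 * c)" by simp
    then show ?thesis unfolding M'_def using dominated_linear_graphD(1)[OF M] by blast
  qed
  ultimately show thesis
    using that dominated_linear_graph_extension[OF M z c] z unfolding M'_def by blast
qed

lemma dominated_linear_graph_line:
  fixes y :: "'a::real_normed_vector"
  assumes "y \<noteq> 0"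
  shows "dominated_linear_graph (range (\<lambda>t. (t *\<^sub>R y, t * norm y)))"
proof (rule dominated_linear_graphI)
  show "(0, 0) \<in> range (\<lambda>t. (t *\<^sub>R y, t * norm y))" by (auto intro!: image_eqI[of _ _ 0])
  show "(x + w, a + b) \<in> range (\<lambda>t. (t *\<^sub>R y, t * norm y))"
    if "(x, a) \<in> range (\<lambda>t. (t *\<^sub>R y, t * norm y))" "(w, b) \<in> range (\<lambda>t. (t *\<^sub>R y, t * norm y))"
    for x a w b
    using that by (auto simp: algebra_simps intro!: image_eqI[of _ _ "_ + _"])
  show "(c *\<^sub>R x, c * a) \<in> range (\<lambda>t. (t *\<^sub>R y, t * norm y))"
    if "(x, a) \<in> range (\<lambda>t. (t *\<^sub>R y, t * norm y))" for x a c
    using that by (auto intro!: image_eqI[of _ _ "c * _"])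
qed (use assms in auto)

lemma dominated_linear_graph_maximal_extension:
  assumes "dominated_linear_graph G0"
  obtains M where "dominated_linear_graph M" "G0 \<subseteq> M" "\<And>x. \<exists>a. (x, a) \<in> M"
proof -
  define A where "A = {G. dominated_linear_graph G \<and> G0 \<subseteq> G}"
  have "\<exists>M\<in>A. \<forall>X\<in>A. M \<subseteq> X \<longrightarrow> X = M"
  proof (rule Zorn_Lemma2, intro ballI)
    fix C assume C: "C \<in> chains A"
    show "\<exists>U\<in>A. \<forall>X\<in>C. X \<subseteq> U"
    proof (cases "C = {}")
      case True
      then show ?thesis using assms unfolding A_def by auto
    next
      case False
      then have "dominated_linear_graph (\<Union>C)" "G0 \<subseteq> \<Union>C"
        using C dominated_linear_graph_Union_chain[of C] unfolding chains_def A_def by auto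
      then show ?thesis unfolding A_def by blast
    qed
  qed
  then obtain M where "M \<in> A" and M_max: "\<And>X. X \<in> A \<Longrightarrow> M \<subseteq> X \<Longrightarrow> X = M" by blast
  then have M: "dominated_linear_graph M" and "G0 \<subseteq> M" unfolding A_def by auto
  have "\<exists>a. (x, a) \<in> M" for x
  proof (rule ccontr)
    assume "\<not> ?thesis"
    then have "\<And>a. (x, a) \<notin> M" by blast
    then obtain M' where "dominated_linear_graph M'" "M \<subset> M'"
      by (rule dominated_linear_graph_extend[OF M])
    then show False using M_max[of M'] \<open>G0 \<subseteq> M\<close> unfolding A_def by auto
  qed
  with M \<open>G0 \<subseteq> M\<close> show thesis by (rule that)
qed

lemma total_dominated_linear_graph_functional:
  fixes M :: "('a::real_normed_vector \<times> real) set"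
  assumes M: "dominated_linear_graph M" and total: "\<And>x. \<exists>a. (x, a) \<in> M"
  obtains f :: "'a \<Rightarrow>\<^sub>L real" where "norm f \<le> 1" "\<And>x a. (x, a) \<in> M \<Longrightarrow> f x = a"
proof -
  note D = dominated_linear_graphD[OF M]
  obtain f where fM: "\<And>x. (x, f x) \<in> M" using total by metis
  have f_eq: "f x = a" if "(x, a) \<in> M" for x a using D(2)[OF that fM] by simp
  have f_le: "norm (f x) \<le> norm x" for x
    using D(5)[OF fM[of x]] D(5)[OF D(4)[OF fM[of x], of "-1"]] by simp
  have "bounded_linear f"
  proof (rule bounded_linear_intro[where K = 1])
    show "f (x + w) = f x + f w" for x w by (rule f_eq[OF D(3)[OF fM fM]])
    show "f (r *\<^sub>R x) = r *\<^sub>R f x" for r x using f_eq[OF D(4)[OF fM[of x], of r]] by simp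
    show "norm (f x) \<le> norm x * 1" for x using f_le[of x] by simp
  qed
  then show thesis
    by (intro that[of "Blinfun f"])
      (auto intro!: norm_blinfun_bound f_eq simp: bounded_linear_Blinfun_apply f_le[unfolded real_norm_def])
qed

lemma hahn_banach_norming_functional:
  fixes y :: "'a::real_normed_vector"
  obtains f :: "'a \<Rightarrow>\<^sub>L real" where "norm f \<le> 1" "f y = norm y"
proof (cases "y = 0")
  case True
  then show thesis by (intro that[of 0]) auto
next
  case False
  obtain M where M: "dominated_linear_graph M" "range (\<lambda>t. (t *\<^sub>R y, t * norm y)) \<subseteq> M"
    and total: "\<And>x. \<exists>a. (x, a) \<in> M"
    using dominated_linear_graph_maximal_extension[OF dominated_linear_graph_line[OF False]] by blast
  obtain f :: "'a \<Rightarrow>\<^sub>L real" where "norm f \<le> 1" and f_eq: "\<And>x a. (x, a) \<in> M \<Longrightarrow> f x = a"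
    using total_dominated_linear_graph_functional[OF M(1) total] by blast
  moreover have "(y, norm y) \<in> M"
    using M(2) rangeI[of "\<lambda>t. (t *\<^sub>R y, t * norm y)" 1] by auto
  ultimately show thesis using that by blast
qed

lemma biorthogonal_functionals:
  fixes S :: "'a::real_normed_vector set"
  assumes "finite S" "independent S"
  obtains \<phi> :: "'a \<Rightarrow> ('a \<Rightarrow>\<^sub>L real)"
  where "\<And>x x'. x \<in> S \<Longrightarrow> x' \<in> S \<Longrightarrow> \<phi> x x' = (if x = x' then 1 else 0)"
  using assms
proof (induction S arbitrary: thesis rule: finite_induct)
  case empty
  then show ?case by blast
next
  case (insert x F)
  obtain \<phi> :: "'a \<Rightarrow> ('a \<Rightarrow>\<^sub>L real)"
    where \<phi>: "\<And>i j. i \<in> F \<Longrightarrow> j \<in> F \<Longrightarrow> \<phi> i j = (if i = j then 1 else 0)"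
    using insert.IH insert.prems(2) independent_mono by blast
  define y where "y = x - (\<Sum>i\<in>F. \<phi> i x *\<^sub>R i)"
  have "y \<noteq> 0"
  proof
    assume "y = 0"
    then have "x = (\<Sum>i\<in>F. \<phi> i x *\<^sub>R i)" unfolding y_def by simp
    also have "\<dots> \<in> span F" by (intro span_sum span_scale span_base)
    finally show False using insert.prems(2) insert.hyps(2) by (simp add: independent_insert)
  qed
  obtain \<psi> :: "'a \<Rightarrow>\<^sub>L real" where \<psi>: "\<psi> y = norm y"
    using hahn_banach_norming_functional by blast
  text \<open>Correct \<psi> so that it vanishes on F; at x it then takes the value \<psi> y = \<parallel>y\<parallel> \<noteq> 0.\<close>
  define \<theta> where "\<theta> = (1 / norm y) *\<^sub>R (\<psi> - (\<Sum>i\<in>F. \<psi> i *\<^sub>R \<phi> i))"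
  have \<theta>_apply: "\<theta> v = (\<psi> v - (\<Sum>i\<in>F. \<psi> i * \<phi> i v)) / norm y" for v
    unfolding \<theta>_def by (simp add: blinfun.diff_left blinfun.sum_left blinfun.scaleR_left)
  have \<theta>_F: "\<theta> j = 0" if "j \<in> F" for j
  proof -
    have "(\<Sum>i\<in>F. \<psi> i * \<phi> i j) = (\<Sum>i\<in>F. if i = j then \<psi> i else 0)"
      by (rule sum.cong) (use \<phi> that in auto)
    then show ?thesis using that insert.hyps(1) \<theta>_apply by simp
  qed
  have "\<psi> y = \<psi> x - (\<Sum>i\<in>F. \<phi> i x * \<psi> i)"
    unfolding y_def by (simp add: blinfun.diff_right blinfun.sum_right blinfun.scaleR_right)
  then have "\<psi> x - (\<Sum>i\<in>F. \<psi> i * \<phi> i x) = norm y" using \<psi> by (simp add: mult.commute)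
  then have \<theta>_x: "\<theta> x = 1" using \<open>y \<noteq> 0\<close> \<theta>_apply by simp
  define \<phi>' where "\<phi>' j = (if j = x then \<theta> else \<phi> j - \<phi> j x *\<^sub>R \<theta>)" for j
  show ?case
    by (rule insert.prems(1)[of \<phi>'])
      (use insert.hyps(2) \<theta>_x \<theta>_F \<phi> in \<open>auto simp: \<phi>'_def blinfun.diff_left blinfun.scaleR_left\<close>)
qed

definition eval_functional :: "'a::real_normed_vector \<Rightarrow> ('b::real_normed_vector \<Rightarrow>\<^sub>L real)
    \<Rightarrow> (('a \<Rightarrow>\<^sub>L 'b) \<Rightarrow>\<^sub>L real)" where
  "eval_functional x g = Blinfun (\<lambda>A. blinfun_apply g (blinfun_apply A x))"

definition rank_one_op :: "('a::real_normed_vector \<Rightarrow>\<^sub>L real) \<Rightarrow> 'b::real_normed_vector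
    \<Rightarrow> ('a \<Rightarrow>\<^sub>L 'b)" where
  "rank_one_op f y = Blinfun (\<lambda>v. blinfun_apply f v *\<^sub>R y)"

lemma eval_functional_apply [simp]: "eval_functional x g A = g (A x)"
proof -
  have "bounded_linear (\<lambda>A::'a \<Rightarrow>\<^sub>L 'b. g (A x))"
    by (rule bounded_linear_compose[OF blinfun.bounded_linear_right blinfun.bounded_linear_left])
  then show ?thesis unfolding eval_functional_def by (simp add: bounded_linear_Blinfun_apply)
qed

lemma rank_one_op_apply [simp]: "rank_one_op f y v = f v *\<^sub>R y"
proof -
  have "bounded_linear (\<lambda>v. f v *\<^sub>R y)"
    by (rule bounded_linear_compose[OF bounded_linear_scaleR_left blinfun.bounded_linear_right])
  then show ?thesis unfolding rank_one_op_def by (simp add: bounded_linear_Blinfun_apply)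
qed

lemma eval_functional_rank_one_op: "eval_functional x g (rank_one_op f y) = f x * g y"
  by (simp add: blinfun.scaleR_right)

lemma eval_functional_in_J_set:
  fixes T :: "'a::real_normed_vector \<Rightarrow>\<^sub>L 'b::real_normed_vector"
  assumes "norm T = 1" "norm x = 1" "g \<in> J_set (T x)"
  shows "eval_functional x g \<in> J_set T"
proof -
  have g: "norm g = 1" "g (T x) = 1" using assms(3) unfolding J_set_def by auto
  have "norm (eval_functional x g) \<le> 1"
  proof (rule norm_blinfun_bound)
    fix A :: "'a \<Rightarrow>\<^sub>L 'b"
    have "norm (g (A x)) \<le> norm g * norm (A x)" by (rule norm_blinfun)
    also have "\<dots> \<le> 1 * norm A" using g assms(2) norm_blinfun[of A x] by simp
    finally show "norm (eval_functional x g A) \<le> 1 * norm A" by simp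
  qed simp
  moreover have "1 \<le> norm (eval_functional x g)"
    using norm_blinfun[of "eval_functional x g" T] g assms(1) by simp
  ultimately show ?thesis using g unfolding J_set_def by simp
qed

lemma inj_eval_functional:
  fixes f :: "'a::real_normed_vector \<Rightarrow>\<^sub>L real"
  assumes "f x = 1"
  shows "inj (eval_functional x :: ('b::real_normed_vector \<Rightarrow>\<^sub>L real) \<Rightarrow> _)"
proof (rule injI)
  fix g g' :: "'b \<Rightarrow>\<^sub>L real"
  assume eq: "eval_functional x g = eval_functional x g'"
  show "g = g'"
  proof (rule blinfun_eqI)
    fix y
    show "g y = g' y"
      using arg_cong[OF eq, of "\<lambda>E. E (rank_one_op f y)"] assms by (simp add: eval_functional_rank_one_op)
  qed
qed

lemma eval_functional_eq_imp_zero: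
  fixes f :: "'a::real_normed_vector \<Rightarrow>\<^sub>L real" and g g' :: "'b::real_normed_vector \<Rightarrow>\<^sub>L real"
  assumes "f x = 1" "f x' = 0" "eval_functional x g = eval_functional x' g'"
  shows "g = 0"
proof (rule blinfun_eqI)
  fix y
  show "g y = blinfun_apply 0 y"
    using arg_cong[OF assms(3), of "\<lambda>E. E (rank_one_op f y)"] assms(1,2)
    by (simp add: eval_functional_rank_one_op)
qed

lemma independent_eval_functionals:
  fixes S :: "'a::real_normed_vector set" and B :: "'a \<Rightarrow> ('b::real_normed_vector \<Rightarrow>\<^sub>L real) set"
  assumes "finite S" "independent S"
    and B: "\<And>x. x \<in> S \<Longrightarrow> finite (B x) \<and> independent (B x)"
  shows "independent (\<Union>x\<in>S. eval_functional x ` B x)"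
    and "card (\<Union>x\<in>S. eval_functional x ` B x) = (\<Sum>x\<in>S. card (B x))"
proof -
  obtain \<phi> :: "'a \<Rightarrow> ('a \<Rightarrow>\<^sub>L real)"
    where \<phi>: "\<And>x x'. x \<in> S \<Longrightarrow> x' \<in> S \<Longrightarrow> \<phi> x x' = (if x = x' then 1 else 0)"
    using biorthogonal_functionals[OF assms(1,2)] by blast
  define U where "U = (\<Union>x\<in>S. eval_functional x ` B x)"
  have inj: "inj_on (eval_functional x) (B x)" if "x \<in> S" for x
    using inj_eval_functional[of "\<phi> x" x] \<phi>[OF that that] inj_on_subset[OF _ subset_UNIV] by simp
  have disjoint: "eval_functional x ` B x \<inter> eval_functional x' ` B x' = {}"
    if "x \<in> S" "x' \<in> S" "x \<noteq> x'" for x x'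
  proof -
    have "g = 0" if "eval_functional x g = eval_functional x' g'" for g g'
      using eval_functional_eq_imp_zero[OF _ _ that, of "\<phi> x"] \<phi> \<open>x \<in> S\<close> \<open>x' \<in> S\<close> \<open>x \<noteq> x'\<close>
      by simp
    moreover have "0 \<notin> B x" using B[OF that(1)] dependent_zero by blast
    ultimately show ?thesis by blast
  qed
  have "finite U" unfolding U_def using assms(1) B by blast
  show "card U = (\<Sum>x\<in>S. card (B x))"
  proof -
    have "card U = (\<Sum>x\<in>S. card (eval_functional x ` B x))"
      unfolding U_def using assms(1) B disjoint by (intro card_UN_disjoint) auto
    also have "\<dots> = (\<Sum>x\<in>S. card (B x))" by (rule sum.cong) (simp_all add: card_image[OF inj])
    finally show ?thesis .
  qed
  show "independent U"
  proof
    assume "dependent U"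
    then obtain u where u: "\<exists>v\<in>U. u v \<noteq> 0" "(\<Sum>v\<in>U. u v *\<^sub>R v) = 0"
      using dependent_finite[OF \<open>finite U\<close>] by blast
    then obtain x0 g0 where x0: "x0 \<in> S" "g0 \<in> B x0" "u (eval_functional x0 g0) \<noteq> 0"
      unfolding U_def by blast
    have "(\<Sum>g\<in>B x0. u (eval_functional x0 g) *\<^sub>R g) y = 0" for y
    proof -
      have "0 = (\<Sum>v\<in>U. u v *\<^sub>R v) (rank_one_op (\<phi> x0) y)" using u(2) by simp
      also have "\<dots> = (\<Sum>v\<in>U. u v * v (rank_one_op (\<phi> x0) y))"
        by (simp add: blinfun.sum_left blinfun.scaleR_left)
      also have "\<dots> = (\<Sum>v\<in>eval_functional x0 ` B x0. u v * v (rank_one_op (\<phi> x0) y))"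
        using x0(1) by (intro sum.mono_neutral_right[OF \<open>finite U\<close>])
          (auto simp: U_def \<phi> blinfun.zero_right split: if_splits)
      also have "\<dots> = (\<Sum>g\<in>B x0. u (eval_functional x0 g) * g y)"
        using \<phi>[OF x0(1,1)] by (simp add: sum.reindex[OF inj[OF x0(1)]])
      also have "\<dots> = (\<Sum>g\<in>B x0. u (eval_functional x0 g) *\<^sub>R g) y"
        by (simp add: blinfun.sum_left blinfun.scaleR_left)
      finally show ?thesis by simp
    qed
    then have "(\<Sum>g\<in>B x0. u (eval_functional x0 g) *\<^sub>R g) = 0" by (intro blinfun_eqI) simp
    then have "dependent (B x0)"
      unfolding dependent_finite[OF conjunct1[OF B[OF x0(1)]]]
      by (intro exI[of _ "\<lambda>g. u (eval_functional x0 g)"]) (use x0 in auto)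
    then show False using B[OF x0(1)] by simp
  qed
qed

lemma finite_dim_set_basis:
  assumes "finite_dim_set A"
  obtains B where "B \<subseteq> A" "independent B" "finite B" "card B = dim (span A)"
proof -
  obtain B0 where "finite B0" "span B0 = span A" using assms unfolding finite_dim_set_def by blast
  obtain B where B: "B \<subseteq> A" "independent B" "A \<subseteq> span B" by (rule maximal_independent_subset)
  have "finite B"
    using independent_span_bound[OF \<open>finite B0\<close> B(2)] B(1) \<open>span B0 = span A\<close> span_superset by blast
  then show thesis using that B basis_card_eq_dim[OF B(1,3,2)] by simp
qed

lemma independent_card_le_dim_span:
  assumes "finite_dim_set A" "U \<subseteq> A" "independent U"
  shows "card U \<le> dim (span A)"
proof -
  obtain B0 where "finite B0" "span B0 = span A" using assms(1) unfolding finite_dim_set_def by blast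
  obtain B where B: "U \<subseteq> B" "B \<subseteq> span A" "independent B" "span A \<subseteq> span B"
    using maximal_independent_subset_extend[of U "span A"] assms(2,3) span_superset by blast
  have "finite B" using independent_span_bound[OF \<open>finite B0\<close> B(3)] B(2) \<open>span B0 = span A\<close> by simp
  then show ?thesis using card_mono[OF _ B(1)] basis_card_eq_dim[OF B(2,4,3)] by simp
qed

theorem mainTheorem3:
  fixes T :: "'a::banach \<Rightarrow>\<^sub>L 'b::banach"
    and S :: "'a set" and m :: "'a \<Rightarrow> nat"
  assumes "reflexive_space TYPE('a)"
    and "norm T = 1"
    and "M_ideal (compact_ops :: ('a \<Rightarrow>\<^sub>L 'b) set)"
    and "infdist T compact_ops < 1"
    and "finite S"
    and "S \<subseteq> M_set T \<inter> {x. x extreme_point_of cball 0 1}"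
    and "independent S"
    and "\<And>S'. S \<subseteq> S' \<Longrightarrow> S' \<subseteq> M_set T \<inter> {x. x extreme_point_of cball 0 1}
               \<Longrightarrow> independent S' \<Longrightarrow> S' = S"
    and "\<And>x. x \<in> S \<Longrightarrow> k_smooth (blinfun_apply T x) (m x)"
  shows "\<not> finite_dim_set (J_set T) \<or> (\<Sum>x\<in>S. m x) \<le> dim (span (J_set T))"
proof (cases "finite_dim_set (J_set T)")
  case False
  then show ?thesis by simp
next
  case True
  have "\<forall>x\<in>S. \<exists>B. B \<subseteq> J_set (T x) \<and> independent B \<and> finite B \<and> card B = m x"
  proof
    fix x assume "x \<in> S"
    then have "finite_dim_set (J_set (T x))" "dim (span (J_set (T x))) = m x"
      using assms(9) unfolding k_smooth_def by auto
    then obtain B where "B \<subseteq> J_set (T x)" "independent B" "finite B" "card B = m x"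
      using finite_dim_set_basis by metis
    then show "\<exists>B. B \<subseteq> J_set (T x) \<and> independent B \<and> finite B \<and> card B = m x" by blast
  qed
  from bchoice[OF this] obtain B where B: "\<forall>x\<in>S. B x \<subseteq> J_set (T x) \<and> independent (B x)
      \<and> finite (B x) \<and> card (B x) = m x"
    by blast
  define U where "U = (\<Union>x\<in>S. eval_functional x ` B x)"
  have "U \<subseteq> J_set T"
    using eval_functional_in_J_set[OF assms(2)] assms(6) B unfolding U_def M_set_def by blast
  moreover have "independent U" "card U = (\<Sum>x\<in>S. m x)"
    using independent_eval_functionals[OF assms(5,7), of B] B unfolding U_def by auto
  ultimately show ?thesis using independent_card_le_dim_span[OF True, of U] by simp
qed

end
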